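(* Let $J_1,J_2$ be either (i) Lennard-Jones potentials: $J_1(z)=\frac{k_1}{z^{12}}-\frac{k_2}{z^6}$ for $z>0$, $J_1(z)=+\infty$ for $z\le0$, with $k_1,k_2>0$, and $J_2(z)=J_1(2z)$; or (ii) Morse potentials: $J_1(z)=k_1\big(1-e^{-k_2(z-\delta_1)}\big)^2-k_1$ for $z\in\mathbb R$ with $\delta_1,k_1,k_2>0$, and $J_2(z)=J_1(2z)$. Let $\delta_1$ be the unique minimizer of $J_1$ and $\gamma$ the unique minimizer of $J_0$. Then $J_1(\gamma)<0$, $J_2(\gamma)<0$, $J_2(\delta_1)<0$, $J_2(\gamma)>2J_2\big(\frac{\delta_1+\gamma}{2}\big)$, and $$R(t):=J_2\Big(\frac{\gamma+t}{2}\Big)+\frac12\big(J_1(\gamma)+J_1(t)\big)-J_0(\gamma)-\frac32\big(J_{CB}(t)-J_0(\gamma)\big)\le0\quad\text{for all }t\in\operatorname{dom}J_1.$$ Furthermore, for every $\theta>0$ there exists $\eta_\theta>0$ such that $J_2\big(\frac{t+\gamma}{2}\big)<0$ for all $t\in\operatorname{dom}J_1$ with $J_1(t)<J_1(\theta)+2\eta_\theta$.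
   Context: $J_{CB}:=J_1+J_2$; $J_0(z):=J_2(z)+\frac12\inf\{J_1(z_1)+J_1(z_2):z_1+z_2=2z\}$. It is known (from prior work) that these potentials satisfy the standing hypotheses of the paper; in particular $J_0$ has a unique minimizer $\gamma>0$, which coincides with the unique minimizer of $J_{CB}$, and $J_0(\gamma)=J_{CB}(\gamma)$. *)

theory Defs
  imports Complex_Main
begin

text \<open>Potentials are real-valued functions together with their effective domain
  D = dom J_1 (the set where J_1 is finite); outside D the paper's J_1 is +infinity,
  so all quantifications and infima are restricted to D.\<close>

definition LJ :: "real \<Rightarrow> real \<Rightarrow> real \<Rightarrow> real" where
  "LJ k1 k2 z = k1 / z ^ 12 - k2 / z ^ 6"

definition Morse :: "real \<Rightarrow> real \<Rightarrow> real \<Rightarrow> real \<Rightarrow> real" where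
  "Morse k1 k2 d1 z = k1 * (1 - exp (- k2 * (z - d1)))\<^sup>2 - k1"

definition JCB :: "(real \<Rightarrow> real) \<Rightarrow> (real \<Rightarrow> real) \<Rightarrow> real \<Rightarrow> real" where
  "JCB J1 J2 z = J1 z + J2 z"

definition J0 :: "real set \<Rightarrow> (real \<Rightarrow> real) \<Rightarrow> (real \<Rightarrow> real) \<Rightarrow> real \<Rightarrow> real" where
  "J0 D J1 J2 z = J2 z + 1/2 * Inf {J1 z1 + J1 z2 | z1 z2. z1 \<in> D \<and> z2 \<in> D \<and> z1 + z2 = 2 * z}"

definition is_minimizer_on :: "real set \<Rightarrow> (real \<Rightarrow> real) \<Rightarrow> real \<Rightarrow> bool" where
  "is_minimizer_on D f x \<longleftrightarrow> x \<in> D \<and> (\<forall>z\<in>D. f x \<le> f z)"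

end

theory Submission
  imports Defs
begin

(* Both potentials are a fixed multiple of  well u = u^2 - 2 u  applied to a reduced variable:
   u = (2 k1 / k2) / z^6 for Lennard-Jones and u = exp (-k2 (z - d1)) for Morse.  The minimizer
   delta1 of J1 is the point where u = 1.  The key step is to show that J1 is midpoint convex at
   gamma; then J0 gamma = JCB gamma and gamma minimizes JCB (lemma gamma_minimizes_JCB), which
   pins down the reduced variable at gamma: u = 4160/4097 for Lennard-Jones, and a cubic
   stationarity equation for Morse.  All claimed inequalities then become elementary
   inequalities in one or two reduced variables. *)

(* Choosing z1 = z2 = z in the infimum defining J0 shows J0 <= JCB; the lower bound on J1
   makes the set of splitting energies bounded below, so that the infimum is a lower bound. *)
lemma J0_le_JCB:
  assumes "z \<in> D" and lower: "\<And>w. w \<in> D \<Longrightarrow> m \<le> J1 w"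
  shows "J0 D J1 J2 z \<le> JCB J1 J2 z"
proof -
  let ?S = "{J1 z1 + J1 z2 | z1 z2. z1 \<in> D \<and> z2 \<in> D \<and> z1 + z2 = 2 * z}"
  have diagonal: "J1 z + J1 z \<in> ?S" using assms(1) by force
  have "bdd_below ?S" unfolding bdd_below_def using lower by (force intro!: add_mono)
  hence "Inf ?S \<le> J1 z + J1 z" using diagonal by (rule cInf_lower[rotated])
  thus ?thesis unfolding J0_def JCB_def by simp
qed

lemma J0_ge:
  assumes "z \<in> D"
    and lower: "\<And>z1 z2. z1 \<in> D \<Longrightarrow> z2 \<in> D \<Longrightarrow> z1 + z2 = 2 * z \<Longrightarrow> L \<le> J1 z1 + J1 z2"
  shows "J2 z + L / 2 \<le> J0 D J1 J2 z"
proof -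
  let ?S = "{J1 z1 + J1 z2 | z1 z2. z1 \<in> D \<and> z2 \<in> D \<and> z1 + z2 = 2 * z}"
  have "?S \<noteq> {}" using assms(1) by force
  hence "L \<le> Inf ?S" by (rule cInf_greatest) (use lower in blast)
  thus ?thesis unfolding J0_def by simp
qed

(* The normalized well u^2 - 2 u: in a suitable reduced variable u, both the Lennard-Jones
   and the Morse potential are a positive multiple of it. *)
definition well :: "real \<Rightarrow> real" where
  "well u = u\<^sup>2 - 2 * u"

lemma well_diff: "well a - well b = (a - b) * (a + b - 2)"
  unfolding well_def by (simp add: algebra_simps power2_eq_square)

lemma well_eq: "well u = (u - 1)\<^sup>2 - 1"
  unfolding well_def by (simp add: algebra_simps power2_eq_square)

lemma well_ge: "-1 \<le> well u"
  unfolding well_eq by simp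

lemma well_minimum_unique: "well u \<le> -1 \<Longrightarrow> u = 1"
  unfolding well_eq by simp

lemma well_neg: "0 < u \<Longrightarrow> u < 2 \<Longrightarrow> well u < 0"
  unfolding well_def by (simp add: power2_eq_square mult_pos_neg
      flip: right_diff_distrib')

(* Convexity plus monotonicity right of 1: if the midpoint value m >= 1 is below the mean
   of a and b, the well at m is below the mean of the wells at a and b. *)
lemma well_midpoint:
  assumes "1 \<le> m" and "2 * m \<le> a + b"
  shows "2 * well m \<le> well a + well b"
proof -
  have "(2 * m - 2)\<^sup>2 \<le> (a + b - 2)\<^sup>2" by (rule power_mono) (use assms in auto)
  moreover have "2 * well a + 2 * well b = (a + b - 2)\<^sup>2 + (a - b)\<^sup>2 - 4"
    unfolding well_eq by (simp add: algebra_simps power2_eq_square)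
  moreover have "4 * well m = (2 * m - 2)\<^sup>2 - 4"
    unfolding well_eq by (simp add: algebra_simps power2_eq_square)
  ultimately show ?thesis using zero_le_power2[of "a - b"] by linarith
qed

(* Right of its minimum the well is increasing, so a smaller well value forces a smaller
   argument. *)
lemma well_less_imp_less:
  assumes "1 \<le> Y" and "well y < well Y"
  shows "y < Y"
proof (rule ccontr)
  assume "\<not> y < Y"
  hence "0 \<le> (y - Y) * (y + Y - 2)" using assms(1) by (intro mult_nonneg_nonneg) auto
  thus False using well_diff[of y Y] assms(2) by linarith
qed

definition interaction_conditions ::
    "(real \<Rightarrow> real) \<Rightarrow> (real \<Rightarrow> real) \<Rightarrow> real set \<Rightarrow> real \<Rightarrow> real \<Rightarrow> bool" where
  "interaction_conditions J1 J2 D \<delta>1 \<gamma> \<longleftrightarrow>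
     J1 \<gamma> < 0 \<and> J2 \<gamma> < 0 \<and> J2 \<delta>1 < 0
     \<and> J2 \<gamma> > 2 * J2 ((\<delta>1 + \<gamma>) / 2)
     \<and> (\<forall>t\<in>D. J2 ((\<gamma> + t) / 2) + 1/2 * (J1 \<gamma> + J1 t) - J0 D J1 J2 \<gamma>
                 - 3/2 * (JCB J1 J2 t - J0 D J1 J2 \<gamma>) \<le> 0)
     \<and> (\<forall>\<theta>>0. \<exists>\<eta>>0. \<forall>t\<in>D. J1 t < J1 \<theta> + 2 * \<eta> \<longrightarrow> J2 ((t + \<gamma>) / 2) < 0)"

locale potential_pair =
  fixes J1 J2 :: "real \<Rightarrow> real" and D :: "real set" and \<delta>1 \<gamma> :: real
  assumes J2_def: "J2 = (\<lambda>z. J1 (2 * z))"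
    and delta1: "is_minimizer_on D J1 \<delta>1"
    and gamma: "is_minimizer_on D (J0 D J1 J2) \<gamma>"
begin

lemma J2_half: "J2 ((a + b) / 2) = J1 (a + b)"
proof -
  have "2 * ((a + b) / 2) = a + b" by simp
  thus ?thesis unfolding J2_def by (simp only:)
qed

lemma J0_gamma_ge:
  assumes lower: "\<And>w. w \<in> D \<Longrightarrow> m \<le> J1 w"
  shows "J2 \<gamma> + m \<le> J0 D J1 J2 \<gamma>"
proof -
  have "\<gamma> \<in> D" using gamma by (simp add: is_minimizer_on_def)
  have "J2 \<gamma> + 2 * m / 2 \<le> J0 D J1 J2 \<gamma>"
    by (rule J0_ge) (use \<open>\<gamma> \<in> D\<close> lower in \<open>auto intro: add_mono[of m _ m, simplified]\<close>)
  thus ?thesis by simp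
qed

lemma J0_gamma_le_JCB:
  assumes lower: "\<And>w. w \<in> D \<Longrightarrow> m \<le> J1 w" and "z \<in> D"
  shows "J0 D J1 J2 \<gamma> \<le> JCB J1 J2 z"
proof -
  have "J0 D J1 J2 \<gamma> \<le> J0 D J1 J2 z" using gamma \<open>z \<in> D\<close> by (simp add: is_minimizer_on_def)
  also have "\<dots> \<le> JCB J1 J2 z" by (rule J0_le_JCB[OF \<open>z \<in> D\<close> lower])
  finally show ?thesis .
qed

lemma gamma_minimizes_JCB:
  assumes lower: "\<And>w. w \<in> D \<Longrightarrow> m \<le> J1 w"
    and convex_at_gamma:
      "\<And>z1 z2. z1 \<in> D \<Longrightarrow> z2 \<in> D \<Longrightarrow> z1 + z2 = 2 * \<gamma> \<Longrightarrow> 2 * J1 \<gamma> \<le> J1 z1 + J1 z2"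
  shows "J0 D J1 J2 \<gamma> = JCB J1 J2 \<gamma>" and "\<And>z. z \<in> D \<Longrightarrow> JCB J1 J2 \<gamma> \<le> JCB J1 J2 z"
proof -
  have "\<gamma> \<in> D" using gamma by (simp add: is_minimizer_on_def)
  have "J2 \<gamma> + 2 * J1 \<gamma> / 2 \<le> J0 D J1 J2 \<gamma>"
    by (rule J0_ge) (use \<open>\<gamma> \<in> D\<close> convex_at_gamma in auto)
  hence "JCB J1 J2 \<gamma> \<le> J0 D J1 J2 \<gamma>" by (simp add: JCB_def)
  with J0_gamma_le_JCB[OF lower \<open>\<gamma> \<in> D\<close>] show "J0 D J1 J2 \<gamma> = JCB J1 J2 \<gamma>" by simp
  show "JCB J1 J2 \<gamma> \<le> JCB J1 J2 z" if "z \<in> D" for z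
    using \<open>JCB J1 J2 \<gamma> \<le> J0 D J1 J2 \<gamma>\<close> J0_gamma_le_JCB[OF lower that] by simp
qed

lemma R_eq:
  assumes "J0 D J1 J2 \<gamma> = JCB J1 J2 \<gamma>"
  shows "J2 ((\<gamma> + t) / 2) + 1/2 * (J1 \<gamma> + J1 t) - J0 D J1 J2 \<gamma>
           - 3/2 * (JCB J1 J2 t - J0 D J1 J2 \<gamma>)
         = J2 ((\<gamma> + t) / 2) + J1 \<gamma> + J2 \<gamma> / 2 - J1 t - 3/2 * J2 t"
  unfolding assms JCB_def by argo

end

definition LJ_depth :: "real \<Rightarrow> real \<Rightarrow> real" where
  "LJ_depth k1 k2 = k2\<^sup>2 / (4 * k1)"

definition LJ_red :: "real \<Rightarrow> real \<Rightarrow> real \<Rightarrow> real" where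
  "LJ_red k1 k2 z = (2 * k1 / k2) / z ^ 6"

lemma LJ_eq_well:
  assumes "k1 \<noteq> 0" and "k2 \<noteq> 0"
  shows "LJ k1 k2 z = LJ_depth k1 k2 * well (LJ_red k1 k2 z)"
  using assms unfolding LJ_def LJ_depth_def LJ_red_def well_def
  by (simp add: field_simps power2_eq_square flip: power_add)

lemma LJ_red_scale: "LJ_red k1 k2 (a * z) = LJ_red k1 k2 z / a ^ 6"
  unfolding LJ_red_def by (simp add: power_mult_distrib)

lemma LJ_red_pos: "k1 > 0 \<Longrightarrow> k2 > 0 \<Longrightarrow> z > 0 \<Longrightarrow> LJ_red k1 k2 z > 0"
  unfolding LJ_red_def by simp

lemma LJ_red_strict_antimono:
  assumes "k1 > 0" "k2 > 0" "0 < a" "a < b"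
  shows "LJ_red k1 k2 b < LJ_red k1 k2 a"
proof -
  have "a ^ 6 < b ^ 6" by (rule power_strict_mono) (use assms in auto)
  thus ?thesis unfolding LJ_red_def using assms by (simp add: divide_strict_left_mono)
qed

lemma LJ_red_antimono:
  assumes "k1 > 0" "k2 > 0" "0 < a" "a \<le> b"
  shows "LJ_red k1 k2 b \<le> LJ_red k1 k2 a"
  using LJ_red_strict_antimono[OF assms(1-3), of b] assms(4) by (cases "a = b") auto

lemma LJ_red_surj:
  assumes "k1 > 0" "k2 > 0" "x > 0"
  obtains z where "z > 0" and "LJ_red k1 k2 z = x"
proof
  show "root 6 (2 * k1 / k2 / x) > 0" using assms by simp
  show "LJ_red k1 k2 (root 6 (2 * k1 / k2 / x)) = x" using assms by (simp add: LJ_red_def)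
qed

lemma sixth_power_midpoint_convex:
  fixes a b :: real assumes "a \<ge> 0" "b \<ge> 0"
  shows "((a + b) / 2) ^ 6 \<le> (a ^ 6 + b ^ 6) / 2"
proof -
  have squares: "((a + b) / 2)\<^sup>2 \<le> (a\<^sup>2 + b\<^sup>2) / 2"
  proof -
    have "(a\<^sup>2 + b\<^sup>2) / 2 - ((a + b) / 2)\<^sup>2 = ((a - b) / 2)\<^sup>2"
      by (simp add: field_simps power2_eq_square)
    thus ?thesis by (metis diff_ge_0_iff_ge zero_le_power2)
  qed
  have cubes: "(P + Q) / 2 \<ge> 0 \<Longrightarrow> ((P + Q) / 2) ^ 3 \<le> (P ^ 3 + Q ^ 3) / 2" for P Q :: real
  proof -
    assume "(P + Q) / 2 \<ge> 0"
    moreover have "(P ^ 3 + Q ^ 3) / 2 - ((P + Q) / 2) ^ 3 = 3/4 * ((P + Q) / 2) * (P - Q)\<^sup>2"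
      by (simp add: field_simps power2_eq_square power3_eq_cube)
    ultimately show ?thesis by (metis diff_ge_0_iff_ge mult_nonneg_nonneg zero_le_divide_iff
          zero_le_numeral zero_le_power2)
  qed
  have "((a + b) / 2) ^ 6 = (((a + b) / 2)\<^sup>2) ^ 3" by (simp flip: power_mult)
  also have "\<dots> \<le> ((a\<^sup>2 + b\<^sup>2) / 2) ^ 3" by (rule power_mono[OF squares]) simp
  also have "\<dots> \<le> ((a\<^sup>2) ^ 3 + (b\<^sup>2) ^ 3) / 2" by (rule cubes) simp
  also have "\<dots> = (a ^ 6 + b ^ 6) / 2" by (simp flip: power_mult)
  finally show ?thesis .
qed

(* The reduced variable z |-> 1/z^6 is midpoint convex on z > 0 (harmonic-arithmetic mean
   inequality followed by convexity of the sixth power). *)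
lemma LJ_red_midpoint_convex:
  assumes "k1 > 0" "k2 > 0" "z1 > 0" "z2 > 0"
  shows "LJ_red k1 k2 ((z1 + z2) / 2) \<le> (LJ_red k1 k2 z1 + LJ_red k1 k2 z2) / 2"
proof -
  have harmonic: "1 / ((z1 + z2) / 2) \<le> (1 / z1 + 1 / z2) / 2"
  proof -
    have "(1 / z1 + 1 / z2) / 2 - 1 / ((z1 + z2) / 2) = (z1 - z2)\<^sup>2 / (2 * z1 * z2 * (z1 + z2))"
      using assms by (simp add: field_simps power2_eq_square)
    moreover have "0 \<le> (z1 - z2)\<^sup>2 / (2 * z1 * z2 * (z1 + z2))" using assms by simp
    ultimately show ?thesis by linarith
  qed
  have "(1 / ((z1 + z2) / 2)) ^ 6 \<le> ((1 / z1 + 1 / z2) / 2) ^ 6"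
    by (rule power_mono[OF harmonic]) (use assms in simp)
  also have "\<dots> \<le> ((1 / z1) ^ 6 + (1 / z2) ^ 6) / 2"
    by (rule sixth_power_midpoint_convex) (use assms in auto)
  finally have "2 * k1 / k2 * (1 / ((z1 + z2) / 2)) ^ 6 \<le> 2 * k1 / k2 * (((1 / z1) ^ 6 + (1 / z2) ^ 6) / 2)"
    using assms by (intro mult_left_mono) auto
  thus ?thesis unfolding LJ_red_def power_one_over by (simp add: algebra_simps add_divide_distrib)
qed

lemma LJ_midpoint:
  assumes "k1 > 0" "k2 > 0" "z1 > 0" "z2 > 0" "z1 + z2 = 2 * z" "1 \<le> LJ_red k1 k2 z"
  shows "2 * LJ k1 k2 z \<le> LJ k1 k2 z1 + LJ k1 k2 z2"
proof -
  have "(z1 + z2) / 2 = z" using assms(5) by simp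
  hence "2 * LJ_red k1 k2 z \<le> LJ_red k1 k2 z1 + LJ_red k1 k2 z2"
    using LJ_red_midpoint_convex[OF assms(1-4)] by simp
  hence "2 * well (LJ_red k1 k2 z) \<le> well (LJ_red k1 k2 z1) + well (LJ_red k1 k2 z2)"
    by (rule well_midpoint[OF assms(6)])
  moreover have "LJ_depth k1 k2 > 0" using assms by (simp add: LJ_depth_def)
  ultimately show ?thesis using assms(1,2)
    by (simp add: LJ_eq_well distrib_left[symmetric] mult.left_commute[of 2])
qed

lemma LJ_pair_well:
  "well u + well (u / 64) - (well (4160/4097) + well (4160/4097 / 64)) = 4097/4096 * (u - 4160/4097)\<^sup>2"
  unfolding well_def by (simp add: field_simps power2_eq_square)

(* The Lennard-Jones remainder in the variable s = t / gamma: clearing denominators gives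
   -(s - 1)^2 Q(s) with a polynomial Q having positive coefficients. *)
lemma LJ_R_poly:
  fixes s :: real assumes s: "s > 0"
  defines "g \<equiv> 4160/4097"
  shows "well (g / (1 + s) ^ 6) + well g + well (g / 64) / 2
           - well (g / s ^ 6) - 3/2 * well (g / s ^ 6 / 64) \<le> 0"
proof -
  define Q where "Q = 34623875 * s^0 + 484734250 * s^1 + 3220020375 * s^2 + 13572559000 * s^3
    + 41063915750 * s^4 + 95977381500 * s^5 + 182813535840 * s^6 + 296234536260 * s^7
    + 422189408745 * s^8 + 540411713530 * s^9 + 626382098615 * s^10 + 657508617480 * s^11
    + 624268169525 * s^12 + 536586508510 * s^13 + 417640386735 * s^14 + 292208004660 * s^15
    + 180068463900 * s^16 + 94500986580 * s^17 + 40432240290 * s^18 + 13363775880 * s^19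
    + 3170487645 * s^20 + 477277710 * s^21 + 34091265 * s^22"
  have "Q > 0" unfolding Q_def using s by (intro add_pos_pos add_nonneg_pos; simp)
  have "1 + s > 0" using s by simp
  have "(g/(1+s)^6)^2 - 2*(g/(1+s)^6) + 1/2*(g^2 - 2*g)
     - ((g/s^6)^2 - 2*(g/s^6)) - 3/2*((g/s^6)^2/4096 - 2*(g/s^6)/64)
     + 1/2*(g^2 - 2*g + (g^2/4096 - 2*g/64)) = -(((s - 1)^2) * Q) / (33570818 * s^12 * (1+s)^12)"
    using s \<open>1 + s > 0\<close> unfolding Q_def g_def by (simp add: field_simps) algebra
  moreover have "-(((s - 1)^2) * Q) / (33570818 * s^12 * (1+s)^12) \<le> 0"
    using \<open>Q > 0\<close> s by (simp add: divide_nonpos_pos)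
  moreover have "well (g / s ^ 6 / 64) = (g/s^6)^2/4096 - 2*(g/s^6)/64"
    and "well (g / 64) = g^2/4096 - 2*g/64"
    by (simp_all add: well_def power_divide)
  ultimately show ?thesis unfolding well_def by argo
qed

locale LJ_problem = potential_pair +
  fixes k1 k2 :: real
  assumes k1: "k1 > 0" and k2: "k2 > 0" and D_LJ: "D = {0<..}" and J1_LJ: "J1 = LJ k1 k2"
begin

abbreviation e where "e \<equiv> LJ_depth k1 k2"
abbreviation q where "q \<equiv> LJ_red k1 k2"

lemma e_pos: "e > 0"
  using k1 k2 by (simp add: LJ_depth_def)

lemma J1_well: "J1 z = e * well (q z)"
  using k1 k2 by (simp add: J1_LJ LJ_eq_well)

lemma J2_well: "J2 z = e * well (q z / 64)"
  by (simp add: J2_def J1_well LJ_red_scale)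

lemma JCB_well: "JCB J1 J2 z = e * (well (q z) + well (q z / 64))"
  by (simp add: JCB_def J1_well J2_well distrib_left)

lemma J1_lower: "-e \<le> J1 z"
  using mult_left_mono[OF well_ge e_pos[THEN less_imp_le]] by (simp add: J1_well)

lemma gamma_pos: "\<gamma> > 0" and delta_pos: "\<delta>1 > 0"
  using gamma delta1 D_LJ by (auto simp: is_minimizer_on_def)

(* The minimizer of J0 lies to the left of the well of J1:
   otherwise J2 at it would be too high compared with the value of JCB
   at the point with reduced variable 4160/4097. *)
lemma red_gamma_ge_1: "1 \<le> q \<gamma>"
proof (rule ccontr)
  assume "\<not> 1 \<le> q \<gamma>"
  moreover have "q \<gamma> > 0" using LJ_red_pos[OF k1 k2 gamma_pos] .
  ultimately have "0 < well (q \<gamma> / 64) - well (1 / 64)"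
    unfolding well_diff by (intro mult_neg_neg) auto
  hence "e * well (1 / 64) < e * well (q \<gamma> / 64)" using e_pos by simp
  also have "\<dots> - e \<le> J0 D J1 J2 \<gamma>"
    using J0_gamma_ge[of "-e"] J1_lower by (simp add: J2_well)
  finally have below: "e * (well (1 / 64) - 1) < J0 D J1 J2 \<gamma>" by (simp add: algebra_simps)
  obtain z where "z > 0" and z: "q z = 4160/4097"
    using LJ_red_surj[OF k1 k2, of "4160/4097"] by auto
  have "J0 D J1 J2 \<gamma> \<le> JCB J1 J2 z"
    using J0_gamma_le_JCB[of "-e" z] J1_lower \<open>z > 0\<close> D_LJ by simp
  also have "\<dots> \<le> e * (well (1 / 64) - 1)"
    unfolding JCB_well z using e_pos by (intro mult_left_mono) (simp_all add: well_def power2_eq_square)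
  finally show False using below by simp
qed

(* gamma minimizes JCB = e * (well q + well (q/64)), a parabola in q with vertex 4160/4097. *)
lemma gamma_JCB: "J0 D J1 J2 \<gamma> = JCB J1 J2 \<gamma>" and red_gamma: "q \<gamma> = 4160/4097"
proof -
  have convex: "2 * J1 \<gamma> \<le> J1 z1 + J1 z2" if "z1 \<in> D" "z2 \<in> D" "z1 + z2 = 2 * \<gamma>" for z1 z2
    using LJ_midpoint[OF k1 k2 _ _ that(3) red_gamma_ge_1] that D_LJ by (simp add: J1_LJ)
  show "J0 D J1 J2 \<gamma> = JCB J1 J2 \<gamma>"
    by (rule gamma_minimizes_JCB(1)[OF J1_lower convex])
  obtain z where "z > 0" and z: "q z = 4160/4097"
    using LJ_red_surj[OF k1 k2, of "4160/4097"] by auto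
  hence "z \<in> D" using D_LJ by simp
  have "JCB J1 J2 \<gamma> \<le> JCB J1 J2 z"
    by (rule gamma_minimizes_JCB(2)[OF J1_lower convex \<open>z \<in> D\<close>])
  hence "well (q \<gamma>) + well (q \<gamma> / 64) \<le> well (4160/4097) + well (4160/4097 / 64)"
    unfolding JCB_well z using e_pos by simp
  hence "(q \<gamma> - 4160/4097)\<^sup>2 \<le> 0" using LJ_pair_well[of "q \<gamma>"] by linarith
  thus "q \<gamma> = 4160/4097" by simp
qed

lemma red_delta: "q \<delta>1 = 1"
proof -
  obtain z where "z > 0" and z: "q z = 1" using LJ_red_surj[OF k1 k2, of 1] by auto
  have "J1 \<delta>1 \<le> J1 z" using delta1 D_LJ \<open>z > 0\<close> by (simp add: is_minimizer_on_def)
  hence "well (q \<delta>1) \<le> well 1" using e_pos by (simp add: J1_well z)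
  thus ?thesis by (intro well_minimum_unique) (simp add: well_def)
qed

(* q is decreasing and q gamma = 4160/4097 > 1 = q delta1. *)
lemma gamma_lt_delta: "\<gamma> < \<delta>1"
  using LJ_red_antimono[OF k1 k2 delta_pos, of \<gamma>] red_gamma red_delta by force

(* The three sign conditions: the reduced variables 4160/4097, 4160/(64 * 4097) and 1/64
   lie in (0, 2), where the well is negative. *)
lemma J1_gamma_neg: "J1 \<gamma> < 0"
  using e_pos well_neg[of "4160/4097"] by (simp add: J1_well red_gamma mult_pos_neg)

lemma J2_gamma_neg: "J2 \<gamma> < 0"
  using e_pos well_neg[of "4160/4097/64"] by (simp add: J2_well red_gamma mult_pos_neg)

lemma J2_delta_neg: "J2 \<delta>1 < 0"
  using e_pos well_neg[of "1/64"] by (simp add: J2_well red_delta mult_pos_neg)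

(* The reduced variable at delta1 + gamma lies in [1/64, 1] since gamma < delta1, and there
   the well is at most its value at 1/64. *)
lemma J2_gap: "J2 \<gamma> > 2 * J2 ((\<delta>1 + \<gamma>) / 2)"
proof -
  define v where "v = q (\<delta>1 + \<gamma>)"
  have "q (2 * \<delta>1) \<le> v" unfolding v_def
    using gamma_pos gamma_lt_delta by (intro LJ_red_antimono[OF k1 k2]) auto
  hence "1/64 \<le> v" by (simp add: LJ_red_scale red_delta)
  moreover have "v \<le> 1" unfolding v_def red_delta[symmetric]
    using gamma_pos delta_pos by (intro LJ_red_antimono[OF k1 k2]) auto
  ultimately have "well v - well (1/64) \<le> 0"
    unfolding well_diff by (intro mult_nonneg_nonpos) auto
  hence "2 * J2 ((\<delta>1 + \<gamma>) / 2) \<le> e * (2 * well (1/64))"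
    using e_pos by (simp add: J2_half J1_well v_def[symmetric])
  also have "\<dots> < e * well (4160/4097/64)"
    using e_pos by (intro mult_strict_left_mono) (simp_all add: well_def power2_eq_square)
  also have "\<dots> = J2 \<gamma>" by (simp add: J2_well red_gamma)
  finally show ?thesis .
qed

(* In the variable s = t / gamma the remainder R(t) is e times the rational function
   of lemma LJ_R_poly. *)
lemma R_nonpos:
  assumes "t \<in> D"
  shows "J2 ((\<gamma> + t) / 2) + 1/2 * (J1 \<gamma> + J1 t) - J0 D J1 J2 \<gamma>
           - 3/2 * (JCB J1 J2 t - J0 D J1 J2 \<gamma>) \<le> 0"
proof -
  define s where "s = t / \<gamma>"
  have "s > 0" using assms D_LJ gamma_pos by (simp add: s_def)
  have "q t = 4160/4097 / s ^ 6"
    using LJ_red_scale[of k1 k2 s \<gamma>] gamma_pos by (simp add: s_def red_gamma)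
  moreover have "q (\<gamma> + t) = 4160/4097 / (1 + s) ^ 6"
    using LJ_red_scale[of k1 k2 "1 + s" \<gamma>] gamma_pos
    by (simp add: s_def red_gamma distrib_right)
  ultimately have "J2 ((\<gamma> + t) / 2) + J1 \<gamma> + J2 \<gamma> / 2 - J1 t - 3/2 * J2 t
      = e * (well (4160/4097 / (1 + s) ^ 6) + well (4160/4097) + well (4160/4097 / 64) / 2
           - well (4160/4097 / s ^ 6) - 3/2 * well (4160/4097 / s ^ 6 / 64))"
    unfolding J2_half by (simp add: J1_well J2_well red_gamma algebra_simps)
  also have "\<dots> \<le> 0"
    using LJ_R_poly[OF \<open>s > 0\<close>] e_pos by (simp add: mult_nonneg_nonpos)
  finally show ?thesis unfolding R_eq[OF gamma_JCB] .
qed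

(* For t > 0 the reduced variable at t + gamma lies in (0, q gamma), inside (0, 2); hence
   eta = 1 works for every theta in the last condition. *)
lemma J2_midpoint_neg:
  assumes "t \<in> D"
  shows "J2 ((t + \<gamma>) / 2) < 0"
proof -
  have "0 < q (t + \<gamma>)" using assms D_LJ gamma_pos by (intro LJ_red_pos[OF k1 k2]) auto
  moreover have "q (t + \<gamma>) < q \<gamma>"
    using assms D_LJ gamma_pos by (intro LJ_red_strict_antimono[OF k1 k2]) auto
  ultimately have "well (q (t + \<gamma>)) < 0" by (intro well_neg) (auto simp: red_gamma)
  thus ?thesis using e_pos by (simp add: J2_half J1_well mult_pos_neg)
qed

theorem conditions: "interaction_conditions J1 J2 D \<delta>1 \<gamma>"
  unfolding interaction_conditions_def
  using J1_gamma_neg J2_gamma_neg J2_delta_neg J2_gap R_nonpos J2_midpoint_neg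
  by (auto intro: exI[of _ 1])

end

definition Morse_red :: "real \<Rightarrow> real \<Rightarrow> real \<Rightarrow> real" where
  "Morse_red k2 d1 z = exp (- k2 * (z - d1))"

lemma Morse_eq_well: "Morse k1 k2 d1 z = k1 * well (Morse_red k2 d1 z)"
  unfolding Morse_def Morse_red_def well_def by (simp add: power2_eq_square algebra_simps)

lemma Morse_red_pos: "Morse_red k2 d1 z > 0"
  by (simp add: Morse_red_def)

lemma Morse_red_double: "Morse_red k2 d1 (2 * z) = exp (- k2 * d1) * (Morse_red k2 d1 z)\<^sup>2"
  unfolding Morse_red_def power2_eq_square by (simp add: mult_exp_exp algebra_simps)

lemma Morse_red_midpoint: "(Morse_red k2 d1 ((a + b) / 2))\<^sup>2 = Morse_red k2 d1 a * Morse_red k2 d1 b"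
  unfolding Morse_red_def power2_eq_square by (simp add: mult_exp_exp algebra_simps)

lemma Morse_red_surj: "k2 \<noteq> 0 \<Longrightarrow> y > 0 \<Longrightarrow> Morse_red k2 d1 (d1 - ln y / k2) = y"
  by (simp add: Morse_red_def)

(* Midpoint inequality for the well in the square-root variables a, b of two reduced
   variables a^2, b^2 whose geometric mean ab is at least 1/2. *)
lemma well_square_midpoint:
  fixes a b :: real assumes "a > 0" "b > 0" "a * b \<ge> 1/2"
  shows "2 * well (a * b) \<le> well (a\<^sup>2) + well (b\<^sup>2)"
proof -
  have "well (a\<^sup>2) + well (b\<^sup>2) - 2 * well (a * b) = (a - b)\<^sup>2 * ((a - b)\<^sup>2 + 4 * (a * b) - 2)"
    unfolding well_def by algebra
  moreover have "0 \<le> (a - b)\<^sup>2 * ((a - b)\<^sup>2 + 4 * (a * b) - 2)"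
    using assms(3) zero_le_power2[of "a - b"] by (intro mult_nonneg_nonneg) linarith+
  ultimately show ?thesis by linarith
qed

lemma Morse_midpoint:
  assumes "k1 > 0" "z1 + z2 = 2 * z" "1/2 \<le> Morse_red k2 d1 z"
  shows "2 * Morse k1 k2 d1 z \<le> Morse k1 k2 d1 z1 + Morse k1 k2 d1 z2"
proof -
  define a where "a = sqrt (Morse_red k2 d1 z1)"
  define b where "b = sqrt (Morse_red k2 d1 z2)"
  have "a > 0" "b > 0" by (simp_all add: a_def b_def Morse_red_pos)
  have "(a * b)\<^sup>2 = (Morse_red k2 d1 z)\<^sup>2"
    using Morse_red_midpoint[of k2 d1 z1 z2] assms(2)
    by (simp add: a_def b_def power_mult_distrib Morse_red_pos less_imp_le)
  hence ab: "a * b = Morse_red k2 d1 z"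
    using \<open>a > 0\<close> \<open>b > 0\<close> Morse_red_pos[of k2 d1 z]
    by (simp add: power2_eq_iff_nonneg)
  have "2 * well (a * b) \<le> well (a\<^sup>2) + well (b\<^sup>2)"
    using \<open>a > 0\<close> \<open>b > 0\<close> assms(3) ab by (intro well_square_midpoint) auto
  hence "k1 * (2 * well (a * b)) \<le> k1 * (well (a\<^sup>2) + well (b\<^sup>2))"
    using assms(1) by simp
  thus ?thesis unfolding Morse_eq_well ab
    by (simp add: a_def b_def Morse_red_pos less_imp_le algebra_simps)
qed

(* Consequences of the stationarity equation satisfied by the reduced variable x at
   the minimizer of J0 (c = exp(-k2 d1) is the Morse parameter). *)
lemma stationary_bounds:
  fixes x c :: real assumes "0 < x" "0 < c" "c < 1" and stat: "2*c^2*x^3 - 2*c*x + x = 1"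
  shows "x < 2" and "c * x < 1"
proof -
  have factored: "x * (2*c^2*x^2 - 2*c + 1) = 1"
    using stat by (simp add: algebra_simps power2_eq_square power3_eq_cube)
  show "x < 2"
  proof (rule ccontr)
    assume "\<not> x < 2"
    hence "2^2 \<le> x^2" by (intro power_mono) auto
    hence "2*c^2*4 \<le> 2*c^2*x^2" by (intro mult_left_mono) auto
    moreover have "8*c^2 - 2*c + 1 - 1/2 = 8*(c - 1/8)^2 + 3/8"
      by (simp add: algebra_simps power2_eq_square)
    ultimately have "2*c^2*x^2 - 2*c + 1 > 1/2" using zero_le_power2[of "c - 1/8"] by linarith
    hence "x * (2*c^2*x^2 - 2*c + 1) > 2 * (1/2)"
      using \<open>\<not> x < 2\<close> by (intro mult_le_less_imp_less) auto
    thus False using factored by simp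
  qed
  show "c * x < 1"
  proof (rule ccontr)
    assume "\<not> c * x < 1"
    hence "(c*x)^2 \<ge> 1" by (simp add: one_le_power)
    moreover have "2*c^2*x^3 = 2*(c*x)^2*x" by (simp add: power2_eq_square power3_eq_cube)
    ultimately have "2*c^2*x^3 \<ge> 2*x" using assms(1) by simp
    moreover have "x > 1" using \<open>\<not> c * x < 1\<close> assms(2,3) mult_strict_right_mono[of c 1 x] assms(1)
      by linarith
    moreover have "1 * 1 < x * (3 - 2*c)" using \<open>x > 1\<close> assms(3) by (intro mult_strict_mono) auto
    ultimately show False using stat by (simp add: algebra_simps)
  qed
qed

(* The cubic factor of J2 gamma - 2 J2 ((delta1 + gamma)/2) in the reduced variable x. *)
lemma Morse_gap_cubic_pos:
  fixes x c :: real assumes "0 < x" "x < 2" "0 < c" "c < 1"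
  shows "0 < c*x^3 - 2*(1+c)*x + 4"
proof (cases "x^2 \<ge> 2")
  case True
  have eq: "c*x^3 - 2*(1+c)*x + 4 = c*x*(x^2-2) + 2*(2-x)"
    by (simp add: algebra_simps power2_eq_square power3_eq_cube)
  have "0 \<le> c*x*(x^2-2)" using True assms by simp
  thus ?thesis unfolding eq using assms by (intro add_nonneg_pos) auto
next
  case False
  have eq: "c*x^3 - 2*(1+c)*x + 4 = (1-c)*x*(2 - x^2) + (x-1)^2*(x+2) + (2-x)"
    by (simp add: algebra_simps power2_eq_square power3_eq_cube)
  have "0 \<le> (1-c)*x*(2 - x^2)" and "0 \<le> (x-1)^2*(x+2)" using False assms by simp_all
  thus ?thesis unfolding eq using assms by (intro add_nonneg_pos add_nonneg_nonneg) auto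
qed

(* Positivity of the quadratic factor in the Morse remainder R(t), written in the
   reduced variables x (at gamma) and y (at t). *)
lemma Morse_R_factor_nonneg:
  fixes x c y :: real assumes x: "0 < x" and c: "0 < c" "c < 1" and y: "0 < y"
    and stat: "2*c^2*x^3 - 2*c*x + x = 1"
  shows "0 \<le> c^2*(3/2*y^2 + 3*x*y + 7/2*x^2) + 1 - 3*c"
proof -
  have "0 \<le> 7*c^2*x^2 + 2 - 6*c"
  proof (rule ccontr)
    assume "\<not> ?thesis"
    hence A: "7*c^2*x^2 < 6*c - 2" by simp
    define P where "P = 2*c^2*x^2 + 1 - 2*c"
    have "x * P = 1"
      using stat by (simp add: P_def algebra_simps power2_eq_square power3_eq_cube)
    moreover have "x * P < x * ((3 - 2*c)/7)" using A x by (simp add: P_def)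
    ultimately have "7 < x * (3 - 2*c)" by simp
    hence "(c*7)^2 < (c * (x * (3 - 2*c)))^2"
      using c by (intro power_strict_mono) auto
    hence "49*c^2 < c^2*x^2*(3-2*c)^2" by (simp add: power_mult_distrib)
    moreover have "(3-2*c)^2 \<le> 3^2" using c by (intro power_mono) auto
    hence "c^2*x^2*(3-2*c)^2 \<le> c^2*x^2*9" by (intro mult_left_mono) auto
    moreover have "0 \<le> 7*c^2*x^2" by simp
    hence "c > 1/3" using A by linarith
    hence "1/9 < c^2" using power_strict_mono[of "1/3" c 2] by (simp add: power2_eq_square)
    ultimately have "49/81 < c^2*x^2" by linarith
    thus False using A c by linarith
  qed
  moreover have "0 \<le> c^2*(3/2*y^2 + 3*x*y)" using x y by simp
  ultimately show ?thesis by (simp add: algebra_simps)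
qed

lemma Morse_R_poly:
  fixes x c y :: real assumes "0 < x" "0 < c" "c < 1" "0 < y"
    and stat: "2*c^2*x^3 - 2*c*x + x = 1"
  shows "well (c * (x * y)) + well x + well (c * x\<^sup>2) / 2 - well y - 3/2 * well (c * y\<^sup>2) \<le> 0"
proof -
  have "well (c * (x * y)) + well x + well (c * x\<^sup>2) / 2 - well y - 3/2 * well (c * y\<^sup>2)
      = - ((y - x)\<^sup>2 * (c^2*(3/2*y^2 + 3*x*y + 7/2*x^2) + 1 - 3*c))
        - (y - x) * (2 * (2*c^2*x^3 - 2*c*x + x - 1))"
    unfolding well_def by (simp add: field_simps power2_eq_square power3_eq_cube)
  also have "\<dots> = - ((y - x)\<^sup>2 * (c^2*(3/2*y^2 + 3*x*y + 7/2*x^2) + 1 - 3*c))"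
    using stat by simp
  also have "\<dots> \<le> 0"
    using Morse_R_factor_nonneg[OF assms] by simp
  finally show ?thesis .
qed

locale Morse_problem = potential_pair +
  fixes k1 k2 d1 :: real
  assumes k1: "k1 > 0" and k2: "k2 > 0" and d1: "d1 > 0" and D_Morse: "D = UNIV"
    and J1_Morse: "J1 = Morse k1 k2 d1"
begin

abbreviation X where "X \<equiv> Morse_red k2 d1"
abbreviation c where "c \<equiv> exp (- k2 * d1)"

lemma c_pos: "0 < c" and c_lt_1: "c < 1"
  using k2 d1 by auto

lemma J1_well: "J1 z = k1 * well (X z)"
  by (simp add: J1_Morse Morse_eq_well)

lemma J2_well: "J2 z = k1 * well (c * (X z)\<^sup>2)"
  by (simp add: J2_def J1_well Morse_red_double)

lemma JCB_well: "JCB J1 J2 z = k1 * (well (X z) + well (c * (X z)\<^sup>2))"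
  by (simp add: JCB_def J1_well J2_well distrib_left)

lemma J1_lower: "-k1 \<le> J1 z"
  using mult_left_mono[OF well_ge, of k1] k1 by (simp add: J1_well)

(* The minimizer of J0 satisfies X gamma >= 1/2: otherwise J2 gamma would exceed the
   value of JCB at d1, where X = 1. *)
lemma red_gamma_ge_half: "1/2 \<le> X \<gamma>"
proof (rule ccontr)
  assume "\<not> 1/2 \<le> X \<gamma>"
  define w where "w = c * (X \<gamma>)\<^sup>2"
  have "(X \<gamma>)\<^sup>2 < (1/2)\<^sup>2"
    using \<open>\<not> 1/2 \<le> X \<gamma>\<close> Morse_red_pos[THEN less_imp_le] by (intro power_strict_mono) auto
  hence "0 < w" "w < c / 4"
    using c_pos Morse_red_pos[of k2 d1 \<gamma>] by (auto simp: w_def power2_eq_square)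
  moreover have "w + c / 4 - 2 < 0" using \<open>w < c / 4\<close> c_lt_1 by linarith
  ultimately have "0 < (w - c / 4) * (w + c / 4 - 2)" by (intro mult_neg_neg) auto
  hence "well (c / 4) < well w" using well_diff[of w "c / 4"] by linarith
  moreover have "well c < well (c / 4)"
  proof -
    have "(c - c / 4) * (c + c / 4 - 2) < 0"
      by (rule mult_pos_neg) (use c_pos c_lt_1 in linarith)+
    thus ?thesis using well_diff[of c "c / 4"] by linarith
  qed
  ultimately have "k1 * (well c - 1) < k1 * (well w - 1)" using k1 by simp
  also have "\<dots> \<le> J0 D J1 J2 \<gamma>"
    using J0_gamma_ge[of "-k1"] J1_lower by (simp add: J2_well w_def algebra_simps)
  also have "\<dots> \<le> JCB J1 J2 d1"
    using J0_gamma_le_JCB[of "-k1" d1] J1_lower D_Morse by simp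
  also have "\<dots> = k1 * (well c - 1)"
    by (simp add: JCB_well Morse_red_def well_def algebra_simps)
  finally show False by simp
qed

lemma convex_at_gamma:
  "z1 + z2 = 2 * \<gamma> \<Longrightarrow> 2 * J1 \<gamma> \<le> J1 z1 + J1 z2"
  using Morse_midpoint[OF k1 _ red_gamma_ge_half] by (simp add: J1_Morse)

lemma gamma_JCB: "J0 D J1 J2 \<gamma> = JCB J1 J2 \<gamma>"
  by (rule gamma_minimizes_JCB(1)[OF J1_lower convex_at_gamma])

(* Since X is onto the positive reals, the reduced variable X gamma minimizes
   y |-> well y + well (c y^2) over y > 0, so its derivative vanishes there. *)
lemma stationary: "2 * c^2 * (X \<gamma>)^3 - 2 * c * X \<gamma> + X \<gamma> = 1"
proof -
  define f where "f y = well y + well (c * y\<^sup>2)" for y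
  have "f (X \<gamma>) \<le> f y" if "y > 0" for y
  proof -
    have "JCB J1 J2 \<gamma> \<le> JCB J1 J2 (d1 - ln y / k2)"
      using gamma_minimizes_JCB(2)[OF J1_lower convex_at_gamma] D_Morse by simp
    thus ?thesis using k1 k2 that by (simp add: JCB_well Morse_red_surj f_def)
  qed
  moreover have "(f has_real_derivative (2 * X \<gamma> - 2 + 4 * c^2 * (X \<gamma>)^3 - 4 * c * X \<gamma>)) (at (X \<gamma>))"
    unfolding f_def well_def
    by (auto intro!: derivative_eq_intros simp: algebra_simps power2_eq_square power3_eq_cube)
  ultimately have "2 * X \<gamma> - 2 + 4 * c^2 * (X \<gamma>)^3 - 4 * c * X \<gamma> = 0"
    by (intro DERIV_local_min[OF _ Morse_red_pos[of k2 d1 \<gamma>]]) auto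
  thus ?thesis by simp
qed

lemma red_gamma_lt_2: "X \<gamma> < 2" and red_gamma_c: "c * X \<gamma> < 1"
  using stationary_bounds[OF Morse_red_pos c_pos c_lt_1 stationary] by auto

lemma red_delta: "X \<delta>1 = 1"
proof -
  have "J1 \<delta>1 \<le> J1 d1" using delta1 D_Morse by (simp add: is_minimizer_on_def)
  hence "well (X \<delta>1) \<le> well 1" using k1 by (simp add: J1_well Morse_red_def)
  thus ?thesis by (intro well_minimum_unique) (simp add: well_def)
qed

(* The three sign conditions: X gamma, c (X gamma)^2 and c all lie in (0, 2). *)
lemma J1_gamma_neg: "J1 \<gamma> < 0"
  using k1 well_neg[OF Morse_red_pos red_gamma_lt_2] by (simp add: J1_well mult_pos_neg)

lemma J2_gamma_neg: "J2 \<gamma> < 0"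
proof -
  have "(c * X \<gamma>) * X \<gamma> < 1 * 2"
    using red_gamma_c red_gamma_lt_2 c_pos less_imp_le[OF Morse_red_pos] by (intro mult_strict_mono) auto
  hence "well (c * (X \<gamma>)\<^sup>2) < 0"
    using c_pos Morse_red_pos by (intro well_neg) (auto simp: power2_eq_square mult.assoc)
  thus ?thesis using k1 by (simp add: J2_well mult_pos_neg)
qed

lemma J2_delta_neg: "J2 \<delta>1 < 0"
proof -
  have "well c < 0" by (rule well_neg) (use c_pos c_lt_1 in linarith)+
  thus ?thesis using k1 by (simp add: J2_well red_delta mult_pos_neg)
qed

(* With x = X gamma, the midpoint of delta1 and gamma has c (X)^2 = c x, and the gap
   factors as k1 c x times a cubic that is positive for 0 < x < 2. *)
lemma J2_gap: "J2 \<gamma> > 2 * J2 ((\<delta>1 + \<gamma>) / 2)"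
proof -
  define x where "x = X \<gamma>"
  have "(X ((\<delta>1 + \<gamma>) / 2))\<^sup>2 = x" by (simp add: Morse_red_midpoint red_delta x_def)
  hence "J2 \<gamma> - 2 * J2 ((\<delta>1 + \<gamma>) / 2) = k1 * (c * x * (c*x^3 - 2*(1+c)*x + 4))"
    unfolding J2_well x_def[symmetric] well_def
    by (simp add: power2_eq_square power3_eq_cube algebra_simps)
  moreover have "0 < k1 * (c * x * (c*x^3 - 2*(1+c)*x + 4))"
    using k1 c_pos Morse_red_pos
      Morse_gap_cubic_pos[OF Morse_red_pos red_gamma_lt_2 c_pos c_lt_1] by (simp add: x_def)
  ultimately show ?thesis by simp
qed

lemma R_nonpos:
  "J2 ((\<gamma> + t) / 2) + 1/2 * (J1 \<gamma> + J1 t) - J0 D J1 J2 \<gamma>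
     - 3/2 * (JCB J1 J2 t - J0 D J1 J2 \<gamma>) \<le> 0"
proof -
  have "J2 ((\<gamma> + t) / 2) + J1 \<gamma> + J2 \<gamma> / 2 - J1 t - 3/2 * J2 t
      = k1 * (well (c * (X \<gamma> * X t)) + well (X \<gamma>) + well (c * (X \<gamma>)\<^sup>2) / 2
              - well (X t) - 3/2 * well (c * (X t)\<^sup>2))"
    by (simp add: J1_well J2_well Morse_red_midpoint algebra_simps)
  also have "\<dots> \<le> 0"
    using k1 Morse_R_poly[OF Morse_red_pos c_pos c_lt_1 Morse_red_pos stationary]
    by (simp add: mult_nonneg_nonpos)
  finally show ?thesis unfolding R_eq[OF gamma_JCB] .
qed

(* If J1 t is below the level k1 * well Y, with Y = 2 / (c X gamma) > 2, then X t < Y and the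
   reduced variable of J2 at (t + gamma)/2 lies in (0, 2), where the well is negative. *)
lemma J2_midpoint_neg_below_level:
  assumes "\<theta> > 0"
  shows "\<exists>\<eta>>0. \<forall>t\<in>D. J1 t < J1 \<theta> + 2 * \<eta> \<longrightarrow> J2 ((t + \<gamma>) / 2) < 0"
proof -
  define Y where "Y = 2 / (c * X \<gamma>)"
  have cx: "0 < c * X \<gamma>" using c_pos Morse_red_pos by simp
  have "Y > 2" using red_gamma_c cx by (simp add: Y_def field_simps)
  have "c * X \<theta> = exp (- k2 * \<theta>)" by (simp add: Morse_red_def mult_exp_exp algebra_simps)
  hence "(c * X \<theta>) * X \<gamma> < 1 * 2"
    using k2 assms red_gamma_lt_2 less_imp_le[OF Morse_red_pos] by (intro mult_strict_mono) auto
  hence "X \<theta> < Y" using cx by (simp add: Y_def field_simps)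
  define level where "level = k1 * well Y"
  define \<eta> where "\<eta> = (level - J1 \<theta>) / 2"
  have "0 < (Y - X \<theta>) * (Y + X \<theta> - 2)"
    using \<open>X \<theta> < Y\<close> \<open>Y > 2\<close> Morse_red_pos[of k2 d1 \<theta>] by (intro mult_pos_pos) auto
  hence "J1 \<theta> < level"
    using k1 well_diff[of Y "X \<theta>"] by (simp add: level_def J1_well right_diff_distrib[symmetric])
  hence "\<eta> > 0" by (simp add: \<eta>_def)
  moreover have "J2 ((t + \<gamma>) / 2) < 0" if "J1 t < J1 \<theta> + 2 * \<eta>" for t
  proof -
    have "J1 t < level" using that unfolding \<eta>_def by (simp add: field_simps)
    hence "well (X t) < well Y" using k1 by (simp add: J1_well level_def)
    hence "X t < Y" by (rule well_less_imp_less[rotated]) (use \<open>Y > 2\<close> in linarith)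
    hence "c * X \<gamma> * X t < c * X \<gamma> * Y" using cx by (rule mult_strict_left_mono)
    also have "c * X \<gamma> * Y = 2" using Morse_red_pos[of k2 d1 \<gamma>] by (simp add: Y_def)
    finally have "c * X \<gamma> * X t < 2" .
    hence "c * (X t * X \<gamma>) < 2" by (simp only: mult.assoc mult.commute[of "X t"])
    hence "well (c * (X t * X \<gamma>)) < 0"
      using c_pos Morse_red_pos by (intro well_neg) auto
    thus ?thesis using k1 by (simp add: J2_well Morse_red_midpoint mult_pos_neg)
  qed
  ultimately show ?thesis by blast
qed

theorem conditions: "interaction_conditions J1 J2 D \<delta>1 \<gamma>"
  unfolding interaction_conditions_def
  using J1_gamma_neg J2_gamma_neg J2_delta_neg J2_gap R_nonpos J2_midpoint_neg_below_level
  by blast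

end

theorem proposition5p10:
  fixes J1 J2 :: "real \<Rightarrow> real" and D :: "real set" and \<delta>1 \<gamma> :: real
  assumes pot: "(\<exists>k1 k2. k1 > 0 \<and> k2 > 0 \<and> D = {0<..} \<and> J1 = LJ k1 k2)
              \<or> (\<exists>k1 k2 d1. k1 > 0 \<and> k2 > 0 \<and> d1 > 0 \<and> D = UNIV \<and> J1 = Morse k1 k2 d1)"
    and J2_def: "J2 = (\<lambda>z. J1 (2 * z))"
    and delta1: "is_minimizer_on D J1 \<delta>1"
    and gamma: "is_minimizer_on D (J0 D J1 J2) \<gamma>"
  shows "J1 \<gamma> < 0 \<and> J2 \<gamma> < 0 \<and> J2 \<delta>1 < 0
     \<and> J2 \<gamma> > 2 * J2 ((\<delta>1 + \<gamma>) / 2)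
     \<and> (\<forall>t\<in>D. J2 ((\<gamma> + t) / 2) + 1/2 * (J1 \<gamma> + J1 t) - J0 D J1 J2 \<gamma>
                 - 3/2 * (JCB J1 J2 t - J0 D J1 J2 \<gamma>) \<le> 0)
     \<and> (\<forall>\<theta>>0. \<exists>\<eta>>0. \<forall>t\<in>D. J1 t < J1 \<theta> + 2 * \<eta> \<longrightarrow> J2 ((t + \<gamma>) / 2) < 0)"
proof -
  have pair: "potential_pair J1 J2 D \<delta>1 \<gamma>"
    using J2_def delta1 gamma by (rule potential_pair.intro)
  from pot have "interaction_conditions J1 J2 D \<delta>1 \<gamma>"
  proof
    assume "\<exists>k1 k2. k1 > 0 \<and> k2 > 0 \<and> D = {0<..} \<and> J1 = LJ k1 k2"
    then obtain k1 k2 where "k1 > 0" "k2 > 0" "D = {0<..}" "J1 = LJ k1 k2" by blast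
    hence "LJ_problem J1 J2 D \<delta>1 \<gamma> k1 k2"
      using pair by (intro LJ_problem.intro LJ_problem_axioms.intro)
    thus ?thesis by (rule LJ_problem.conditions)
  next
    assume "\<exists>k1 k2 d1. k1 > 0 \<and> k2 > 0 \<and> d1 > 0 \<and> D = UNIV \<and> J1 = Morse k1 k2 d1"
    then obtain k1 k2 d1 where "k1 > 0" "k2 > 0" "d1 > 0" "D = UNIV" "J1 = Morse k1 k2 d1" by blast
    hence "Morse_problem J1 J2 D \<delta>1 \<gamma> k1 k2 d1"
      using pair by (intro Morse_problem.intro Morse_problem_axioms.intro)
    thus ?thesis by (rule Morse_problem.conditions)
  qed
  thus ?thesis unfolding interaction_conditions_def .
qed

end
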